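(* Let $a,b\in\mathbb{B}^2$ with $a\ne b$ and $|a|\ne|b|$. Put $$t=\frac{-(1-|a|^2)+\sqrt{(1-|a|^2)(1-|b|^2)}}{|a|^2-|b|^2},\qquad c=(1-t)a+tb.$$ Then $0<t<1$, $h_{\mathbb{B}^2}(a,c)=h_{\mathbb{B}^2}(c,b)$, and $\rho_{\mathbb{B}^2}(a,c)=\rho_{\mathbb{B}^2}(c,b)$.
   Context: $\mathbb{B}^2$ is the open unit disk in $\mathbb{C}$. The hyperbolic metric is given by $\operatorname{sh}\frac{\rho_{\mathbb{B}^2}(x,y)}{2}=\frac{|x-y|}{\sqrt{(1-|x|^2)(1-|y|^2)}}$. For distinct $x,y\in\mathbb{B}^2$ the Hilbert metric is $h_{\mathbb{B}^2}(x,y)=\log\frac{|u-y||x-v|}{|u-x||y-v|}$, where $u,v$ are the intersection points of the line through $x,y$ with the unit circle, labelled so that $|u-x|<|u-y|$. *)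

theory Defs
  imports "HOL-Analysis.Analysis"
begin

definition rho_disk :: "complex \<Rightarrow> complex \<Rightarrow> real" where
  "rho_disk x y = 2 * arsinh (cmod (x - y) / sqrt ((1 - (cmod x)\<^sup>2) * (1 - (cmod y)\<^sup>2)))"

definition on_line :: "complex \<Rightarrow> complex \<Rightarrow> complex \<Rightarrow> bool" where
  "on_line x y z \<longleftrightarrow> (\<exists>s::real. z = x + complex_of_real s * (y - x))"

definition hilbert_disk :: "complex \<Rightarrow> complex \<Rightarrow> real" where
  "hilbert_disk x y = (if x = y then 0 else
     (THE r. \<exists>u v. u \<noteq> v \<and> cmod u = 1 \<and> cmod v = 1 \<and> on_line x y u \<and> on_line x y v
        \<and> cmod (u - x) < cmod (u - y)
        \<and> r = ln ((cmod (u - y) * cmod (x - v)) / (cmod (u - x) * cmod (y - v)))))"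

end

theory Submission
  imports Defs
begin

text \<open>Both equalities hold exactly when \<open>(1 - t)\<^sup>2 (1 - |a|\<^sup>2) = t\<^sup>2 (1 - |b|\<^sup>2)\<close>.
  For \<open>\<rho>\<close> this is immediate, as \<open>|a - c| = t |b - a|\<close> and \<open>|c - b| = (1 - t) |b - a|\<close>.
  For the Hilbert metric, parametrise the chord as \<open>a + s (b - a)\<close>: it meets the circle at the
  roots \<open>s\<^sub>1 < 0 < 1 < s\<^sub>2\<close> of \<open>|a + s (b - a)|\<^sup>2 - 1\<close>, so by Vieta \<open>1 - |a|\<^sup>2\<close> and \<open>1 - |b|\<^sup>2\<close>
  are \<open>|b - a|\<^sup>2\<close> times \<open>-s\<^sub>1 s\<^sub>2\<close> and \<open>(1 - s\<^sub>1)(s\<^sub>2 - 1)\<close>, and the condition becomes equality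
  of the cross ratios of \<open>(s\<^sub>1, 0, t, s\<^sub>2)\<close> and \<open>(s\<^sub>1, t, 1, s\<^sub>2)\<close>. The given \<open>t\<close> is the root
  \<open>\<surd>(1 - |a|\<^sup>2) / (\<surd>(1 - |a|\<^sup>2) + \<surd>(1 - |b|\<^sup>2))\<close> of the condition in \<open>(0, 1)\<close>.\<close>

lemma real_quadratic_factor_neg_const:
  fixes p q r :: real
  assumes "p > 0" and "r < 0"
  obtains s1 s2 where "s1 < 0" and "0 < s2"
    and "\<And>s. p * s\<^sup>2 + q * s + r = p * (s - s1) * (s - s2)"
proof -
  define e where "e = sqrt (q\<^sup>2 - 4 * p * r)"
  have "0 < q\<^sup>2 - 4 * p * r"
    using mult_pos_neg[OF assms] zero_le_square[of q]
    by (simp only: power2_eq_square mult.assoc)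
  hence e2: "e\<^sup>2 = q\<^sup>2 - 4 * p * r" and "\<bar>q\<bar> < e"
    unfolding e_def using mult_pos_neg[OF assms] by (auto intro!: real_less_rsqrt)
  moreover have "p * s\<^sup>2 + q * s + r = p * (s - (- q - e) / (2 * p)) * (s - (- q + e) / (2 * p))"
    for s using \<open>p > 0\<close> e2 by (simp add: field_simps power2_eq_square) algebra
  ultimately show ?thesis
    using \<open>p > 0\<close> by (intro that) (auto simp: divide_neg_pos)
qed

lemma norm_line_point_diff:
  "cmod (a + complex_of_real s * d - (a + complex_of_real p * d)) = \<bar>s - p\<bar> * cmod d"
proof -
  have "a + complex_of_real s * d - (a + complex_of_real p * d) = complex_of_real (s - p) * d"
    by (simp add: algebra_simps)
  thus ?thesis by (simp only: norm_mult norm_of_real)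
qed

lemma norm_line_point_squared:
  "(cmod (a + complex_of_real s * d))\<^sup>2
     = (cmod d)\<^sup>2 * s\<^sup>2 + 2 * (Re a * Re d + Im a * Im d) * s + (cmod a)\<^sup>2"
  unfolding cmod_power2 by (simp add: power2_eq_square algebra_simps)

lemma line_unit_circle_params:
  fixes a d :: complex
  assumes "cmod a < 1" and "cmod (a + d) < 1" and "d \<noteq> 0"
  obtains s1 s2 where "s1 < 0" and "1 < s2"
    and "\<And>s. (cmod (a + complex_of_real s * d))\<^sup>2 - 1 = (cmod d)\<^sup>2 * (s - s1) * (s - s2)"
proof -
  have "(cmod a)\<^sup>2 < 1" using assms(1) by (simp add: abs_square_less_1)
  moreover have "(cmod d)\<^sup>2 > 0" using assms(3) by simp
  ultimately obtain s1 s2 where "s1 < 0" "0 < s2" and quad: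
    "\<And>s. (cmod d)\<^sup>2 * s\<^sup>2 + 2 * (Re a * Re d + Im a * Im d) * s + ((cmod a)\<^sup>2 - 1)
       = (cmod d)\<^sup>2 * (s - s1) * (s - s2)"
    by (metis diff_less_0_iff_less real_quadratic_factor_neg_const)
  have fac: "(cmod (a + complex_of_real s * d))\<^sup>2 - 1 = (cmod d)\<^sup>2 * (s - s1) * (s - s2)" for s
    using quad[of s] unfolding norm_line_point_squared by simp
  have "(cmod (a + d))\<^sup>2 < 1" using assms(2) by (simp add: abs_square_less_1)
  hence "(cmod d)\<^sup>2 * (1 - s1) * (1 - s2) < 0" using fac[of 1] by simp
  hence "1 < s2"
    using \<open>s1 < 0\<close> assms(3) by (auto simp: mult_less_0_iff)
  with \<open>s1 < 0\<close> fac show ?thesis by (intro that)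
qed

lemma on_line_param_iff:
  fixes a d u :: complex and p q :: real
  assumes "p \<noteq> q"
  shows "on_line (a + complex_of_real p * d) (a + complex_of_real q * d) u
    \<longleftrightarrow> (\<exists>s. u = a + complex_of_real s * d)"
proof
  assume "on_line (a + complex_of_real p * d) (a + complex_of_real q * d) u"
  then obtain k where "u = a + complex_of_real p * d
      + complex_of_real k * (a + complex_of_real q * d - (a + complex_of_real p * d))"
    unfolding on_line_def by blast
  hence "u = a + complex_of_real (p + k * (q - p)) * d" by (simp add: algebra_simps)
  thus "\<exists>s. u = a + complex_of_real s * d" ..
next
  assume "\<exists>s. u = a + complex_of_real s * d"
  then obtain s where "u = a + complex_of_real s * d" ..
  moreover define k where "k = (s - p) / (q - p)"
  ultimately have "u = a + complex_of_real (p + k * (q - p)) * d" using assms by simp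
  hence "u = a + complex_of_real p * d
      + complex_of_real k * (a + complex_of_real q * d - (a + complex_of_real p * d))"
    by (simp add: algebra_simps)
  thus "on_line (a + complex_of_real p * d) (a + complex_of_real q * d) u"
    unfolding on_line_def by blast
qed

lemma hilbert_disk_line:
  fixes a d :: complex and p q s1 s2 :: real
  assumes "d \<noteq> 0" and "s1 < p" "p < q" "q < s2"
    and circle: "\<And>s. cmod (a + complex_of_real s * d) = 1 \<longleftrightarrow> s = s1 \<or> s = s2"
  shows "hilbert_disk (a + complex_of_real p * d) (a + complex_of_real q * d)
    = ln ((q - s1) * (s2 - p) / ((p - s1) * (s2 - q)))"
proof -
  define z where "z s = a + complex_of_real s * d" for s
  have dist: "cmod (z s - z r) = \<bar>s - r\<bar> * cmod d" for s r
    unfolding z_def by (rule norm_line_point_diff)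
  have "cmod d > 0" using \<open>d \<noteq> 0\<close> by simp
  hence z_eq_iff: "z s = z r \<longleftrightarrow> s = r" for s r
    using dist[of s r] by (metis abs_eq_0 eq_iff_diff_eq_0 mult_eq_0_iff norm_eq_zero order.irrefl)
  have line: "on_line (z p) (z q) u \<longleftrightarrow> (\<exists>s. u = z s)" for u
    unfolding z_def using \<open>p < q\<close> by (simp add: on_line_param_iff)
  \<comment> \<open>The extra conjunct \<open>R\<close> lets this rewrite the body of the \<open>THE\<close> in \<open>hilbert_disk\<close>.\<close>
  have ends: "u \<noteq> v \<and> cmod u = 1 \<and> cmod v = 1 \<and> on_line (z p) (z q) u \<and> on_line (z p) (z q) v
      \<and> cmod (u - z p) < cmod (u - z q) \<and> R \<longleftrightarrow> u = z s1 \<and> v = z s2 \<and> R" for u v R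
  proof
    assume uv: "u \<noteq> v \<and> cmod u = 1 \<and> cmod v = 1 \<and> on_line (z p) (z q) u
      \<and> on_line (z p) (z q) v \<and> cmod (u - z p) < cmod (u - z q) \<and> R"
    then obtain su sv where u: "u = z su" and v: "v = z sv" using line by blast
    hence "su = s1 \<or> su = s2" "sv = s1 \<or> sv = s2" using uv circle unfolding z_def by auto
    moreover have "su \<noteq> s2"
      using uv dist[of s2 p] dist[of s2 q] \<open>cmod d > 0\<close> assms(2-4) u by auto
    ultimately show "u = z s1 \<and> v = z s2 \<and> R" using uv u v by auto
  next
    assume uv: "u = z s1 \<and> v = z s2 \<and> R"
    have "z s1 \<noteq> z s2" using z_eq_iff assms(2-4) by simp
    moreover have "cmod (z s1) = 1" "cmod (z s2) = 1" using circle unfolding z_def by simp_all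
    moreover have "on_line (z p) (z q) (z s1)" "on_line (z p) (z q) (z s2)" using line by blast+
    moreover have "cmod (z s1 - z p) < cmod (z s1 - z q)"
      unfolding dist using \<open>cmod d > 0\<close> assms(2-4) by simp
    ultimately show "u \<noteq> v \<and> cmod u = 1 \<and> cmod v = 1 \<and> on_line (z p) (z q) u \<and> on_line (z p) (z q) v
      \<and> cmod (u - z p) < cmod (u - z q) \<and> R"
      using uv by simp
  qed
  have "hilbert_disk (z p) (z q)
      = ln (cmod (z s1 - z q) * cmod (z p - z s2) / (cmod (z s1 - z p) * cmod (z q - z s2)))"
    unfolding hilbert_disk_def ends using z_eq_iff \<open>p < q\<close> by simp
  also have "\<dots> = ln ((q - s1) * (s2 - p) / ((p - s1) * (s2 - q)))"
    unfolding dist using \<open>cmod d > 0\<close> assms(2-4) by simp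
  finally show ?thesis unfolding z_def .
qed

lemma cross_ratio_split_eq:
  fixes s1 s2 t :: real
  assumes "s1 < 0" "0 < t" "t < 1" "1 < s2"
    and balance: "t\<^sup>2 * ((1 - s1) * (s2 - 1)) = (1 - t)\<^sup>2 * (- s1 * s2)"
  shows "(t - s1) * (s2 - 0) / ((0 - s1) * (s2 - t)) = (1 - s1) * (s2 - t) / ((t - s1) * (s2 - 1))"
proof -
  define Q where "Q = t\<^sup>2 * (s1 + s2 - 1) - 2 * s1 * s2 * t + s1 * s2"
  have "Q = t\<^sup>2 * ((1 - s1) * (s2 - 1)) - (1 - t)\<^sup>2 * (- s1 * s2)"
    unfolding Q_def by (simp add: power2_eq_square algebra_simps)
  hence "Q = 0" using balance by simp
  moreover have "(t - s1) * (s2 - 0) * ((t - s1) * (s2 - 1)) - (1 - s1) * (s2 - t) * ((0 - s1) * (s2 - t))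
      = (s2 - s1) * Q"
    unfolding Q_def by (simp add: power2_eq_square algebra_simps)
  ultimately have cross: "(t - s1) * (s2 - 0) * ((t - s1) * (s2 - 1))
      = (1 - s1) * (s2 - t) * ((0 - s1) * (s2 - t))"
    by simp
  have "(0 - s1) * (s2 - t) \<noteq> 0" and "(t - s1) * (s2 - 1) \<noteq> 0"
    using assms(1-4) by auto
  thus ?thesis using cross by (subst frac_eq_eq) auto
qed

lemma hilbert_disk_split_eq:
  fixes a b :: complex and t :: real
  assumes "cmod a < 1" "cmod b < 1" "a \<noteq> b" "0 < t" "t < 1"
    and balance: "t\<^sup>2 * (1 - (cmod b)\<^sup>2) = (1 - t)\<^sup>2 * (1 - (cmod a)\<^sup>2)"
  defines "c \<equiv> complex_of_real (1 - t) * a + complex_of_real t * b"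
  shows "hilbert_disk a c = hilbert_disk c b"
proof -
  define d where "d = b - a"
  have "d \<noteq> 0" "cmod (a + d) < 1" using assms(2,3) unfolding d_def by auto
  then obtain s1 s2 where "s1 < 0" "1 < s2" and fac:
    "\<And>s. (cmod (a + complex_of_real s * d))\<^sup>2 - 1 = (cmod d)\<^sup>2 * (s - s1) * (s - s2)"
    using line_unit_circle_params[OF assms(1)] by blast
  have "(cmod d)\<^sup>2 > 0" using \<open>d \<noteq> 0\<close> by simp
  have circle: "cmod (a + complex_of_real s * d) = 1 \<longleftrightarrow> s = s1 \<or> s = s2" for s
  proof -
    have "cmod (a + complex_of_real s * d) = 1 \<longleftrightarrow> (cmod (a + complex_of_real s * d))\<^sup>2 - 1 = 0"
      by (smt (verit) norm_ge_zero power2_eq_1_iff)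
    thus ?thesis unfolding fac using \<open>(cmod d)\<^sup>2 > 0\<close> by simp
  qed
  have "a = a + complex_of_real 0 * d" "c = a + complex_of_real t * d" "b = a + complex_of_real 1 * d"
    unfolding c_def d_def by (simp_all add: algebra_simps)
  hence "hilbert_disk a c = ln ((t - s1) * (s2 - 0) / ((0 - s1) * (s2 - t)))"
    and "hilbert_disk c b = ln ((1 - s1) * (s2 - t) / ((t - s1) * (s2 - 1)))"
    using hilbert_disk_line[OF \<open>d \<noteq> 0\<close> _ _ _ circle] \<open>s1 < 0\<close> \<open>1 < s2\<close> assms(4,5)
    by (metis order.strict_trans)+
  moreover have "1 - (cmod a)\<^sup>2 = (cmod d)\<^sup>2 * (- s1 * s2)"
    and "1 - (cmod b)\<^sup>2 = (cmod d)\<^sup>2 * ((1 - s1) * (s2 - 1))"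
    using fac[of 0] fac[of 1] unfolding d_def by (simp_all add: algebra_simps)
  hence "(cmod d)\<^sup>2 * (t\<^sup>2 * ((1 - s1) * (s2 - 1))) = (cmod d)\<^sup>2 * ((1 - t)\<^sup>2 * (- s1 * s2))"
    using balance by (simp only: mult.left_commute)
  hence "t\<^sup>2 * ((1 - s1) * (s2 - 1)) = (1 - t)\<^sup>2 * (- s1 * s2)"
    using \<open>(cmod d)\<^sup>2 > 0\<close> by (metis mult_left_cancel order.irrefl)
  ultimately show ?thesis
    using cross_ratio_split_eq \<open>s1 < 0\<close> \<open>1 < s2\<close> assms(4,5) by simp
qed

lemma rho_disk_split_eq:
  fixes a b :: complex and t :: real
  assumes "cmod a < 1" "cmod b < 1" "0 \<le> t" "t \<le> 1"
    and balance: "t\<^sup>2 * (1 - (cmod b)\<^sup>2) = (1 - t)\<^sup>2 * (1 - (cmod a)\<^sup>2)"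
  defines "c \<equiv> complex_of_real (1 - t) * a + complex_of_real t * b"
  shows "rho_disk a c = rho_disk c b"
proof -
  define sa sb sc where "sa = sqrt (1 - (cmod a)\<^sup>2)" and "sb = sqrt (1 - (cmod b)\<^sup>2)"
    and "sc = sqrt (1 - (cmod c)\<^sup>2)"
  have "sa > 0" "sb > 0" unfolding sa_def sb_def using assms(1,2) by (simp_all add: abs_square_less_1)
  have "t * sb = (1 - t) * sa"
    using arg_cong[OF balance, of sqrt] assms(3,4) unfolding sa_def sb_def by (simp add: real_sqrt_mult)
  hence ratio: "t / sa = (1 - t) / sb" using \<open>sa > 0\<close> \<open>sb > 0\<close> by (simp add: frac_eq_eq)
  have "a - c = complex_of_real t * (a - b)" and "c - b = complex_of_real (1 - t) * (a - b)"
    unfolding c_def by (simp_all add: algebra_simps)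
  hence "cmod (a - c) = t * cmod (a - b)" and "cmod (c - b) = (1 - t) * cmod (a - b)"
    using assms(3,4) by (simp_all only: norm_mult norm_of_real abs_of_nonneg diff_ge_0_iff_ge)
  hence "cmod (a - c) / (sa * sc) = t / sa * (cmod (a - b) / sc)"
    and "cmod (c - b) / (sc * sb) = (1 - t) / sb * (cmod (a - b) / sc)"
    by simp_all
  hence "cmod (a - c) / (sa * sc) = cmod (c - b) / (sc * sb)" unfolding ratio by simp
  thus ?thesis unfolding rho_disk_def sa_def sb_def sc_def by (simp add: real_sqrt_mult)
qed

lemma hyperbolic_midpoint_param_eq:
  fixes A B :: real
  assumes "A < 1" "B < 1" "A \<noteq> B"
  shows "(- (1 - A) + sqrt ((1 - A) * (1 - B))) / (A - B) = sqrt (1 - A) / (sqrt (1 - A) + sqrt (1 - B))"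
proof -
  define sa sb where "sa = sqrt (1 - A)" and "sb = sqrt (1 - B)"
  have "sa > 0" "sb > 0" "sa \<noteq> sb" unfolding sa_def sb_def using assms by auto
  have "1 - A = sa\<^sup>2" "1 - B = sb\<^sup>2" "sqrt ((1 - A) * (1 - B)) = sa * sb"
    unfolding sa_def sb_def using assms by (simp_all add: real_sqrt_mult)
  hence "- (1 - A) + sqrt ((1 - A) * (1 - B)) = sa * (sb - sa)" and "A - B = (sb - sa) * (sa + sb)"
    by (simp_all add: power2_eq_square algebra_simps)
  thus ?thesis using \<open>sa > 0\<close> \<open>sb > 0\<close> \<open>sa \<noteq> sb\<close> unfolding sa_def[symmetric] sb_def[symmetric]
    by simp
qed

theorem mainTheorem10:
  fixes a b :: complex
  assumes "cmod a < 1" and "cmod b < 1" and "a \<noteq> b" and "cmod a \<noteq> cmod b"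
  defines "t \<equiv> (- (1 - (cmod a)\<^sup>2) + sqrt ((1 - (cmod a)\<^sup>2) * (1 - (cmod b)\<^sup>2)))
                 / ((cmod a)\<^sup>2 - (cmod b)\<^sup>2)"
  defines "c \<equiv> complex_of_real (1 - t) * a + complex_of_real t * b"
  shows "0 < t \<and> t < 1 \<and> hilbert_disk a c = hilbert_disk c b \<and> rho_disk a c = rho_disk c b"
proof -
  define sa sb where "sa = sqrt (1 - (cmod a)\<^sup>2)" and "sb = sqrt (1 - (cmod b)\<^sup>2)"
  have "(cmod a)\<^sup>2 < 1" "(cmod b)\<^sup>2 < 1" "(cmod a)\<^sup>2 \<noteq> (cmod b)\<^sup>2"
    using assms(1,2,4) by (simp_all add: abs_square_less_1)
  hence t: "t = sa / (sa + sb)"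
    unfolding t_def sa_def sb_def by (rule hyperbolic_midpoint_param_eq)
  have "sa > 0" "sb > 0" using \<open>(cmod a)\<^sup>2 < 1\<close> \<open>(cmod b)\<^sup>2 < 1\<close> unfolding sa_def sb_def by simp_all
  hence "0 < t" "t < 1" "t * sb = (1 - t) * sa" unfolding t by (simp_all add: field_simps)
  hence "t\<^sup>2 * sb\<^sup>2 = (1 - t)\<^sup>2 * sa\<^sup>2" by (metis power_mult_distrib)
  hence balance: "t\<^sup>2 * (1 - (cmod b)\<^sup>2) = (1 - t)\<^sup>2 * (1 - (cmod a)\<^sup>2)"
    using \<open>(cmod a)\<^sup>2 < 1\<close> \<open>(cmod b)\<^sup>2 < 1\<close> unfolding sa_def sb_def by simp
  have "hilbert_disk a c = hilbert_disk c b"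
    unfolding c_def using assms(1-3) \<open>0 < t\<close> \<open>t < 1\<close> balance by (rule hilbert_disk_split_eq)
  moreover have "rho_disk a c = rho_disk c b"
    unfolding c_def using \<open>0 < t\<close> \<open>t < 1\<close> assms(1,2) balance by (intro rho_disk_split_eq) simp_all
  ultimately show ?thesis using \<open>0 < t\<close> \<open>t < 1\<close> by blast
qed

end
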